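(* Let $\mathfrak d$ be a delta operator with basic sequence $(p_n(x))_{n\ge0}$, let $a,b\in\mathbb K$, and let $\mathcal Z$ be the arithmetic grid $(a+bi)_{i\ge0}$. Then for every $n\ge1$, $$t_n(x;\mathfrak d,\mathcal Z)=\frac{(x-a)\,p_n(x-a-nb)}{x-a-nb},$$ where the right side is a polynomial since $p_n(y)$ is divisible by $y$.
   Context: $\mathbb K$ is a field of characteristic zero; a delta operator is a linear operator $\mathfrak d$ on $\mathbb K[x]$ commuting with all shifts $E_a:f(x)\mapsto f(x+a)$ and with $\mathfrak d(x)$ a nonzero constant; its basic sequence is the unique $(p_n)$ with $\deg p_n=n$, $p_0=1$, $p_n(0)=0$ ($n\ge1$), $\mathfrak dp_n=np_{n-1}$. $\varepsilon_z$ is evaluation at $z$. $t_n(x;\mathfrak d,\mathcal Z)$ is the $n$-th term of the generalized Gončarov basis associated with $(\mathfrak d,\mathcal Z)$, i.e. the unique sequence $(t_n)_{n\ge0}$ with $\deg t_n=n$ and $\varepsilon_{z_i}(\mathfrak d^{\,i}(t_n))=n!\,\delta_{i,n}$ for all $i,n$. *)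

theory Defs
  imports "HOL-Computational_Algebra.Polynomial"
begin

definition shift_poly :: "'a::comm_ring_1 \<Rightarrow> 'a poly \<Rightarrow> 'a poly" where
  "shift_poly a f = pcompose f [:a, 1:]"

definition delta_operator :: "('a::field poly \<Rightarrow> 'a poly) \<Rightarrow> bool" where
  "delta_operator d \<longleftrightarrow>
     (\<forall>f g. d (f + g) = d f + d g) \<and>
     (\<forall>c f. d (smult c f) = smult c (d f)) \<and>
     (\<forall>a f. d (shift_poly a f) = shift_poly a (d f)) \<and>
     (\<exists>c. c \<noteq> 0 \<and> d [:0, 1:] = [:c:])"

definition basic_sequence :: "('a::field poly \<Rightarrow> 'a poly) \<Rightarrow> (nat \<Rightarrow> 'a poly) \<Rightarrow> bool" where
  "basic_sequence d p \<longleftrightarrow>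
     (\<forall>n. degree (p n) = n) \<and> p 0 = 1 \<and>
     (\<forall>n\<ge>1. poly (p n) 0 = 0) \<and>
     (\<forall>n. d (p (Suc n)) = smult (of_nat (Suc n)) (p n))"

definition goncarov_basis :: "('a::field poly \<Rightarrow> 'a poly) \<Rightarrow> (nat \<Rightarrow> 'a) \<Rightarrow> (nat \<Rightarrow> 'a poly) \<Rightarrow> bool" where
  "goncarov_basis d z t \<longleftrightarrow>
     (\<forall>n. degree (t n) = n) \<and>
     (\<forall>i n. poly ((d ^^ i) (t n)) (z i) = (if i = n then of_nat (fact n) else 0))"

end

theory Submission
  imports Defs
begin

text \<open>
  A delta operator lowers degrees by exactly one, so a polynomial of degree at most n
  satisfying the n + 1 homogeneous Goncarov conditions vanishes; it therefore suffices to exhibit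
  one polynomial of degree n satisfying the conditions. Put A_0 = 1 and
  A_n(x) = (x + n b) p_n(x) / x for n \<ge> 1. Then A_n(-n b) = 0 for n \<ge> 1 and
  d A_n = n A_(n-1), so the shifted polynomials A_n(x - a - n b) satisfy the conditions on the
  grid, each application of d moving the base point from a to a + b. The relation for A_n
  reduces to d q_n = n q_(n-1) for q_n = p_(n+1)(x) / x. This holds because q_n is a sum of
  C(n,k) c_k p_(n-k)(x), and d lowers every such sum like a basic sequence.
  That expansion is obtained by comparing derivatives, using the derivative at y = 0 of the
  binomial identity p_n(x + y) = sum of C(n,k) p_k(y) p_(n-k)(x).
\<close>

lemma smult_sum_right: "smult c (sum f A) = (\<Sum>i\<in>A. smult c (f i))"
  by (induction A rule: infinite_finite_induct) (simp_all add: smult_add_right)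

lemma pderiv_sum: "pderiv (sum f A) = (\<Sum>i\<in>A. pderiv (f i))"
  by (induction A rule: infinite_finite_induct) (simp_all add: pderiv_add)

lemma coeff_1_pcompose_shift: "coeff (pcompose f [:x, 1:]) 1 = poly (pderiv f) x"
proof -
  have "coeff (pcompose f [:x, 1:]) 1 = poly (pderiv (pcompose f [:x, 1:])) 0"
    by (simp add: poly_0_coeff_0 coeff_pderiv)
  then show ?thesis by (simp add: pderiv_pcompose poly_pcompose pderiv_pCons)
qed

lemma sum_atMost_triangle_swap:
  fixes G :: "nat \<Rightarrow> nat \<Rightarrow> 'b::comm_monoid_add"
  shows "(\<Sum>k\<le>n. \<Sum>j\<le>n-k. G k j) = (\<Sum>j\<le>n. \<Sum>k\<le>n-j. G k j)"
proof -
  have restrict: "{j. j \<le> n \<and> k + j \<le> n} = {..n - k}"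
    "{j. j \<le> n \<and> j + k \<le> n} = {..n - k}" if "k \<le> n" for k
    using that by auto
  have "(\<Sum>k\<le>n. \<Sum>j\<le>n-k. G k j) = (\<Sum>k\<le>n. sum (G k) {j. j \<in> {..n} \<and> k + j \<le> n})"
    by (rule sum.cong) (simp_all add: restrict)
  also have "\<dots> = (\<Sum>j\<le>n. sum (\<lambda>k. G k j) {k. k \<in> {..n} \<and> k + j \<le> n})"
    by (rule sum.swap_restrict) auto
  also have "\<dots> = (\<Sum>j\<le>n. \<Sum>k\<le>n-j. G k j)"
    by (rule sum.cong) (simp_all add: restrict)
  finally show ?thesis .
qed

lemma choose_mult_swap:
  assumes "k + j \<le> n"
  shows "(n choose k) * (n - k choose j) = (n choose j) * (n - j choose k)"
  using choose_mult[of k "k + j" n] choose_mult[of j "k + j" n] binomial_symmetric[of k "k + j"] assms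
  by simp

lemma pderiv_eq_imp_eq:
  fixes f g :: "'a::field_char_0 poly"
  assumes "pderiv f = pderiv g" and "poly f z = poly g z"
  shows "f = g"
proof -
  obtain h where "f - g = [:h:]"
    using assms(1) pderiv_iszero[of "f - g"] by (auto simp: pderiv_diff)
  moreover have "poly (f - g) z = 0"
    using assms(2) by simp
  ultimately show ?thesis
    by simp
qed

locale delta_basis =
  fixes d :: "'a::field_char_0 poly \<Rightarrow> 'a poly" and p :: "nat \<Rightarrow> 'a poly"
  assumes delta: "delta_operator d" and basic: "basic_sequence d p"
begin

lemma delta_add: "d (f + g) = d f + d g"
  and delta_smult: "d (smult c f) = smult c (d f)"
  and delta_shift: "d (shift_poly a f) = shift_poly a (d f)"
  and delta_x: "\<exists>c. c \<noteq> 0 \<and> d [:0, 1:] = [:c:]"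
  using delta unfolding delta_operator_def by blast+

lemma degree_basic: "degree (p n) = n"
  and basic_0: "p 0 = 1"
  and poly_basic_0: "n \<ge> 1 \<Longrightarrow> poly (p n) 0 = 0"
  and delta_basic: "d (p (Suc n)) = smult (of_nat (Suc n)) (p n)"
  using basic unfolding basic_sequence_def by blast+

lemma basic_nonzero: "p n \<noteq> 0"
  using degree_basic[of n] basic_0 by (cases n) auto

lemma delta_0 [simp]: "d 0 = 0"
  using delta_smult[of 0 0] by simp

lemma delta_diff: "d (f - g) = d f - d g"
  using delta_add[of "f - g" g] by simp

lemma delta_sum: "d (sum f A) = (\<Sum>i\<in>A. d (f i))"
  by (induction A rule: infinite_finite_induct) (simp_all add: delta_add)

lemma delta_1: "d 1 = 0"
proof -
  obtain k where k: "d [:0, 1:] = [:k:]"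
    using delta_x by blast
  have "shift_poly 1 [:0, 1:] = [:0, 1:] + 1"
    by (simp add: shift_poly_def pcompose_pCons one_pCons)
  then have "d [:0, 1:] + d 1 = shift_poly 1 (d [:0, 1:])"
    by (metis delta_shift delta_add)
  also have "\<dots> = d [:0, 1:]"
    using k by (simp add: shift_poly_def)
  finally show ?thesis by simp
qed

lemma delta_degree_0: "degree f = 0 \<Longrightarrow> d f = 0"
  using delta_smult[of "coeff f 0" 1] by (metis delta_1 degree_0_id smult_0_right smult_one)

lemma basic_leading_decomp:
  assumes "degree f = Suc m"
  obtains c g where "c \<noteq> 0" and "degree g \<le> m" and "f = g + smult c (p (Suc m))"
proof
  define c where "c = lead_coeff f / lead_coeff (p (Suc m))"
  define g where "g = f - smult c (p (Suc m))"
  have "f \<noteq> 0" and "lead_coeff (p (Suc m)) \<noteq> 0"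
    using assms basic_nonzero by auto
  then show "c \<noteq> 0"
    by (simp add: c_def)
  have "coeff g (Suc m) = 0"
    using assms \<open>lead_coeff (p (Suc m)) \<noteq> 0\<close> by (simp add: g_def c_def degree_basic)
  moreover have "degree g \<le> Suc m"
    unfolding g_def using assms degree_smult_le[of c "p (Suc m)"]
    by (intro degree_diff_le) (simp_all add: degree_basic)
  ultimately show "degree g \<le> m"
    by (metis le_SucE leading_coeff_0_iff degree_0 nat.distinct(1))
  show "f = g + smult c (p (Suc m))"
    by (simp add: g_def)
qed

lemma delta_degree_Suc: "degree f = Suc m \<Longrightarrow> d f \<noteq> 0 \<and> degree (d f) = m"
proof (induction m arbitrary: f rule: less_induct)
  case (less m)
  obtain c g where "c \<noteq> 0" and "degree g \<le> m" and f: "f = g + smult c (p (Suc m))"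
    using basic_leading_decomp[OF less.prems] .
  have "degree (d g) < m \<or> d g = 0"
  proof (cases "degree g")
    case 0
    then show ?thesis by (simp add: delta_degree_0)
  next
    case (Suc m')
    then show ?thesis
      using less.IH[of m' g] \<open>degree g \<le> m\<close> by simp
  qed
  then have "degree (d g) \<le> m" and "coeff (d g) m = 0"
    by (auto simp: coeff_eq_0)
  define h where "h = smult (c * of_nat (Suc m)) (p m)"
  have "degree h = m" and "coeff h m \<noteq> 0"
    using \<open>c \<noteq> 0\<close> basic_nonzero[of m] leading_coeff_0_iff[of "p m"]
    by (simp_all add: h_def degree_basic del: of_nat_Suc)
  have "d f = d g + h"
    unfolding f
    by (simp add: h_def delta_add delta_smult delta_basic del: of_nat_Suc)
  then have "coeff (d f) m \<noteq> 0" and "degree (d f) \<le> m"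
    using \<open>coeff (d g) m = 0\<close> \<open>coeff h m \<noteq> 0\<close> \<open>degree (d g) \<le> m\<close> \<open>degree h = m\<close>
    by (simp_all add: degree_add_le)
  then show ?case
    using le_degree[of "d f" m] by auto
qed

lemma degree_delta: "degree (d f) = degree f - 1"
  using delta_degree_Suc[of f] delta_degree_0[of f] by (cases "degree f") auto

lemma delta_eq_0_iff: "d f = 0 \<longleftrightarrow> degree f = 0"
  using delta_degree_Suc[of f] delta_degree_0[of f] by (cases "degree f") auto

lemma delta_eq_imp_eq:
  assumes "d f = d g" and "poly f z = poly g z"
  shows "f = g"
proof -
  have "degree (f - g) = 0"
    using assms(1) delta_eq_0_iff[of "f - g"] by (simp add: delta_diff)
  then have "f - g = [:poly (f - g) z:]"
    by (metis degree_0_id poly_pCons mult_zero_right add.right_neutral poly_0)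
  then show ?thesis
    using assms(2) by simp
qed

lemma funpow_delta_diff: "(d ^^ i) (f - g) = (d ^^ i) f - (d ^^ i) g"
  by (induction i) (simp_all add: delta_diff)

lemma funpow_delta_smult: "(d ^^ i) (smult c f) = smult c ((d ^^ i) f)"
  by (induction i) (simp_all add: delta_smult)

lemma goncarov_interpolation_zero:
  assumes "degree f \<le> n" and "\<forall>i\<le>n. poly ((d ^^ i) f) (z i) = 0"
  shows "f = 0"
  using assms
proof (induction n arbitrary: f z)
  case 0
  then show ?case
    using delta_eq_imp_eq[of f 0 "z 0"] by (simp add: delta_degree_0)
next
  case (Suc n)
  have "poly ((d ^^ i) (d f)) (z (Suc i)) = 0" if "i \<le> n" for i
    using Suc.prems(2) that by (metis Suc_le_mono funpow_Suc_right o_apply)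
  then have "d f = 0"
    using Suc.IH[of "d f" "\<lambda>i. z (Suc i)"] Suc.prems(1) by (simp add: degree_delta)
  then show ?case
    using delta_eq_imp_eq[of f 0 "z 0"] Suc.prems(2)[rule_format, of 0] by simp
qed

lemma goncarov_basis_unique:
  assumes "goncarov_basis d z t" and "degree q \<le> n"
    and "\<And>i. poly ((d ^^ i) q) (z i) = (if i = n then of_nat (fact n) else 0)"
  shows "t n = q"
proof -
  have "degree (t n) = n" and "\<And>i. poly ((d ^^ i) (t n)) (z i) = (if i = n then of_nat (fact n) else 0)"
    using assms(1) unfolding goncarov_basis_def by blast+
  then have "t n - q = 0"
    using assms(2,3) by (intro goncarov_interpolation_zero[of _ n z]) (simp_all add: degree_diff_le funpow_delta_diff)
  then show ?thesis by simp
qed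

lemma poly_shift_poly: "poly (shift_poly a f) x = poly f (x + a)"
  by (simp add: shift_poly_def poly_pcompose add.commute)

lemma shift_poly_smult: "shift_poly a (smult c f) = smult c (shift_poly a f)"
  by (simp add: shift_poly_def pcompose_smult)

definition sheffer :: "(nat \<Rightarrow> 'a) \<Rightarrow> nat \<Rightarrow> 'a poly" where
  "sheffer c n = (\<Sum>k\<le>n. smult (of_nat (n choose k) * c k) (p (n - k)))"

lemma delta_sheffer: "d (sheffer c (Suc n)) = smult (of_nat (Suc n)) (sheffer c n)"
proof -
  have "d (sheffer c (Suc n)) = (\<Sum>k\<le>Suc n. smult (of_nat (Suc n choose k) * c k) (d (p (Suc n - k))))"
    by (simp only: sheffer_def delta_sum delta_smult)
  also have "\<dots> = (\<Sum>k\<le>n. smult (of_nat (Suc n choose k) * c k) (d (p (Suc (n - k)))))"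
    by (simp add: basic_0 delta_1 Suc_diff_le)
  also have "\<dots> = (\<Sum>k\<le>n. smult (of_nat (Suc n) * (of_nat (n choose k) * c k)) (p (n - k)))"
  proof (rule sum.cong [OF refl])
    fix k assume "k \<in> {..n}"
    then have "(Suc n choose k) * Suc (n - k) = Suc n * (n choose k)"
      using binomial_absorb_comp[of "Suc n" k] by (simp add: Suc_diff_le mult.commute)
    then have "of_nat (Suc n choose k) * c k * of_nat (Suc (n - k)) = of_nat (Suc n) * (of_nat (n choose k) * c k)"
      by (metis (no_types, opaque_lifting) mult.assoc mult.commute of_nat_mult)
    then show "smult (of_nat (Suc n choose k) * c k) (d (p (Suc (n - k))))
        = smult (of_nat (Suc n) * (of_nat (n choose k) * c k)) (p (n - k))"
      by (simp only: delta_basic smult_smult)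
  qed
  also have "\<dots> = smult (of_nat (Suc n)) (sheffer c n)"
    by (simp only: sheffer_def smult_sum_right smult_smult)
  finally show ?thesis .
qed

lemma poly_sheffer_0: "poly (sheffer c n) 0 = c n"
proof -
  have "poly (p (n - k)) 0 = (if k = n then 1 else 0)" if "k \<le> n" for k
    using that poly_basic_0[of "n - k"] by (simp add: basic_0)
  then have "poly (sheffer c n) 0 = (\<Sum>k\<le>n. if k = n then c n else 0)"
    unfolding sheffer_def poly_sum by (intro sum.cong) auto
  then show ?thesis
    by simp
qed

lemma shift_poly_basic: "shift_poly y (p n) = sheffer (\<lambda>k. poly (p k) y) n"
proof (induction n)
  case 0
  then show ?case
    by (simp add: sheffer_def basic_0 shift_poly_def pcompose_1)
next
  case (Suc n)
  show ?case
  proof (rule delta_eq_imp_eq)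
    show "d (shift_poly y (p (Suc n))) = d (sheffer (\<lambda>k. poly (p k) y) (Suc n))"
      by (simp only: delta_shift delta_basic shift_poly_smult Suc.IH delta_sheffer)
    show "poly (shift_poly y (p (Suc n))) 0 = poly (sheffer (\<lambda>k. poly (p k) y) (Suc n)) 0"
      by (simp add: poly_shift_poly poly_sheffer_0)
  qed
qed

lemma sheffer_rev: "sheffer c n = (\<Sum>k\<le>n. smult (of_nat (n choose k) * c (n - k)) (p k))"
proof -
  have "sheffer c n = (\<Sum>k\<le>n. smult (of_nat (n choose (n - k)) * c (n - k)) (p (n - (n - k))))"
    unfolding sheffer_def atMost_atLeast0 by (subst sum.atLeastAtMost_rev) simp
  also have "\<dots> = (\<Sum>k\<le>n. smult (of_nat (n choose k) * c (n - k)) (p k))"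
    by (rule sum.cong) (simp_all add: binomial_symmetric[symmetric])
  finally show ?thesis .
qed

definition lin_coeff :: "nat \<Rightarrow> 'a" where
  "lin_coeff k = coeff (p k) 1"

lemma lin_coeff_0: "lin_coeff 0 = 0"
  by (simp add: lin_coeff_def basic_0)

lemma pderiv_basic: "pderiv (p n) = sheffer lin_coeff n"
proof -
  have "poly (pderiv (p n)) x = poly (sheffer lin_coeff n) x" for x
  proof -
    have "poly (pderiv (p n)) x = coeff (shift_poly x (p n)) 1"
      by (simp only: shift_poly_def coeff_1_pcompose_shift)
    also have "\<dots> = (\<Sum>k\<le>n. of_nat (n choose k) * poly (p k) x * lin_coeff (n - k))"
      by (simp add: shift_poly_basic sheffer_def coeff_sum lin_coeff_def)
    also have "\<dots> = poly (sheffer lin_coeff n) x"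
      by (simp add: sheffer_rev poly_sum mult_ac)
    finally show ?thesis .
  qed
  then show ?thesis
    using poly_eq_poly_eq_iff by blast
qed

lemma pderiv_sheffer:
  "pderiv (sheffer c n) = (\<Sum>j\<le>n. smult (of_nat (n choose j) * lin_coeff j) (sheffer c (n - j)))"
proof -
  have "pderiv (sheffer c n) = (\<Sum>k\<le>n. \<Sum>j\<le>n - k.
      smult (of_nat (n choose k) * c k * (of_nat (n - k choose j) * lin_coeff j)) (p (n - k - j)))"
    by (simp add: sheffer_def pderiv_sum pderiv_smult pderiv_basic smult_sum_right)
  also have "\<dots> = (\<Sum>j\<le>n. \<Sum>k\<le>n - j.
      smult (of_nat (n choose k) * c k * (of_nat (n - k choose j) * lin_coeff j)) (p (n - k - j)))"
    by (rule sum_atMost_triangle_swap)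
  also have "\<dots> = (\<Sum>j\<le>n. \<Sum>k\<le>n - j.
      smult (of_nat (n choose j) * lin_coeff j * (of_nat (n - j choose k) * c k)) (p (n - j - k)))"
  proof (intro sum.cong refl)
    fix j k assume "j \<in> {..n}" "k \<in> {..n - j}"
    then have "(of_nat (n choose k) * of_nat (n - k choose j) :: 'a) = of_nat (n choose j) * of_nat (n - j choose k)"
      by (metis choose_mult_swap of_nat_mult atMost_iff le_diff_conv2 add.commute)
    then show "smult (of_nat (n choose k) * c k * (of_nat (n - k choose j) * lin_coeff j)) (p (n - k - j))
        = smult (of_nat (n choose j) * lin_coeff j * (of_nat (n - j choose k) * c k)) (p (n - j - k))"
      by (simp add: mult_ac add.commute)
  qed
  also have "\<dots> = (\<Sum>j\<le>n. smult (of_nat (n choose j) * lin_coeff j) (sheffer c (n - j)))"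
    by (simp add: sheffer_def smult_sum_right)
  finally show ?thesis .
qed

definition basic_div_x :: "nat \<Rightarrow> 'a poly" where
  "basic_div_x = sheffer (\<lambda>k. lin_coeff (Suc k))"

text \<open>Both sides vanish at 0 and, by induction, have the same derivative.\<close>

lemma basic_Suc_eq: "p (Suc n) = [:0, 1:] * basic_div_x n"
proof (induction n rule: less_induct)
  case (less n)
  define F where "F j = smult (of_nat (n choose j) * lin_coeff j) (p (Suc n - j))" for j
  have "[:0, 1:] * pderiv (basic_div_x n)
      = (\<Sum>j\<le>n. smult (of_nat (n choose j) * lin_coeff j) ([:0, 1:] * basic_div_x (n - j)))"
    by (simp add: basic_div_x_def pderiv_sheffer sum_distrib_left mult_smult_right)
  also have "\<dots> = (\<Sum>j\<le>n. F j)"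
  proof (rule sum.cong [OF refl])
    fix j assume "j \<in> {..n}"
    show "smult (of_nat (n choose j) * lin_coeff j) ([:0, 1:] * basic_div_x (n - j)) = F j"
    proof (cases j)
      case 0
      then show ?thesis by (simp add: F_def lin_coeff_0)
    next
      case (Suc j')
      then have "p (Suc (n - j)) = [:0, 1:] * basic_div_x (n - j)"
        using \<open>j \<in> {..n}\<close> by (intro less.IH) auto
      moreover have "Suc (n - j) = Suc n - j"
        using \<open>j \<in> {..n}\<close> by simp
      ultimately show ?thesis
        by (simp only: F_def)
    qed
  qed
  finally have x_pderiv: "[:0, 1:] * pderiv (basic_div_x n) = (\<Sum>j\<le>n. F j)" .
  have "pderiv (p (Suc n))
      = (\<Sum>j\<le>n. smult (of_nat (Suc n choose Suc j) * lin_coeff (Suc j)) (p (n - j)))"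
    by (simp add: pderiv_basic sheffer_def sum.atMost_Suc_shift lin_coeff_0 del: sum.atMost_Suc)
  also have "\<dots> = (\<Sum>j\<le>n. smult (of_nat (n choose j) * lin_coeff (Suc j)) (p (n - j)) + F (Suc j))"
    by (rule sum.cong [OF refl]) (simp add: F_def algebra_simps smult_add_left)
  also have "\<dots> = basic_div_x n + (\<Sum>j\<le>n. F (Suc j))"
    by (simp add: sum.distrib basic_div_x_def sheffer_def)
  also have "(\<Sum>j\<le>n. F (Suc j)) = (\<Sum>j\<le>n. F j)"
  proof -
    have "F 0 = 0" and "F (Suc n) = 0"
      by (simp_all add: F_def lin_coeff_0)
    then show ?thesis
      using sum.atMost_Suc_shift[of F n] by simp
  qed
  finally have "pderiv (p (Suc n)) = basic_div_x n + [:0, 1:] * pderiv (basic_div_x n)"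
    by (simp only: x_pderiv)
  then have "pderiv (p (Suc n)) = pderiv ([:0, 1:] * basic_div_x n)"
    by (simp add: pderiv_mult pderiv_pCons)
  then show ?case
    by (rule pderiv_eq_imp_eq[where z = 0]) (simp add: poly_basic_0)
qed

lemma basic_div_x_nonzero: "basic_div_x m \<noteq> 0"
  using basic_Suc_eq[of m] basic_nonzero[of "Suc m"] by auto

lemma degree_basic_div_x: "degree (basic_div_x m) = m"
  using basic_Suc_eq[of m] degree_basic[of "Suc m"] basic_div_x_nonzero[of m]
  by (simp add: degree_mult_eq)

text \<open>\<open>abel b n\<close> is \<open>(x + n b) p_n(x) / x\<close>.\<close>

definition abel :: "'a \<Rightarrow> nat \<Rightarrow> 'a poly" where
  "abel b n = (case n of 0 \<Rightarrow> 1 | Suc m \<Rightarrow> [:of_nat (Suc m) * b, 1:] * basic_div_x m)"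

lemma abel_0: "abel b 0 = 1"
  and abel_Suc: "abel b (Suc m) = [:of_nat (Suc m) * b, 1:] * basic_div_x m"
  by (simp_all add: abel_def)

lemma abel_Suc_eq: "abel b (Suc m) = p (Suc m) + smult (of_nat (Suc m) * b) (basic_div_x m)"
  by (simp add: abel_Suc basic_Suc_eq mult_pCons_left add.commute)

lemma delta_abel: "d (abel b (Suc m)) = smult (of_nat (Suc m)) (abel b m)"
proof (cases m)
  case 0
  have "d (basic_div_x 0) = 0"
    by (simp add: delta_degree_0 degree_basic_div_x)
  then show ?thesis
    using 0 by (simp add: abel_Suc_eq delta_add delta_smult delta_basic basic_0 abel_0)
next
  case (Suc m')
  have "d (abel b (Suc m)) = smult (of_nat (Suc m)) (p m) + smult (of_nat (Suc m) * b * of_nat m) (basic_div_x m')"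
    by (simp only: abel_Suc_eq delta_add delta_smult delta_basic Suc basic_div_x_def delta_sheffer smult_smult)
  also have "\<dots> = smult (of_nat (Suc m)) (abel b m)"
    by (simp add: Suc abel_Suc_eq smult_add_right mult_ac del: of_nat_Suc)
  finally show ?thesis .
qed

lemma degree_abel: "degree (abel b n) = n"
proof (cases n)
  case (Suc m)
  show ?thesis
    unfolding Suc abel_Suc by (subst degree_mult_eq) (simp_all add: basic_div_x_nonzero degree_basic_div_x)
qed (simp add: abel_0)

definition goncarov :: "'a \<Rightarrow> 'a \<Rightarrow> nat \<Rightarrow> 'a poly" where
  "goncarov a b n = shift_poly (- (a + of_nat n * b)) (abel b n)"

lemma delta_goncarov: "d (goncarov a b (Suc m)) = smult (of_nat (Suc m)) (goncarov (a + b) b m)"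
proof -
  have "- (a + of_nat (Suc m) * b) = - (a + b + of_nat m * b)"
    by (simp add: algebra_simps)
  then show ?thesis
    by (simp only: goncarov_def delta_shift delta_abel shift_poly_smult)
qed

lemma degree_goncarov: "degree (goncarov a b n) = n"
  by (simp add: goncarov_def shift_poly_def degree_pcompose degree_abel)

lemma poly_goncarov: "poly (goncarov a b n) a = (if n = 0 then 1 else 0)"
  by (cases n) (simp_all add: goncarov_def poly_shift_poly abel_0 abel_Suc)

lemma poly_funpow_delta_goncarov:
  "poly ((d ^^ i) (goncarov a b n)) (a + b * of_nat i) = (if i = n then of_nat (fact n) else 0)"
proof (induction i arbitrary: a n)
  case 0
  then show ?case
    by (simp add: poly_goncarov)
next
  case (Suc i)
  show ?case
  proof (cases n)
    case 0
    have "d (goncarov a b 0) = 0"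
      by (simp add: goncarov_def shift_poly_def abel_0 pcompose_1 delta_1)
    then show ?thesis
      using 0 funpow_delta_smult[of i 0 0] by (simp add: funpow_Suc_right del: funpow.simps)
  next
    case (Suc m)
    have "(d ^^ Suc i) (goncarov a b n) = smult (of_nat n) ((d ^^ i) (goncarov (a + b) b m))"
      by (simp only: Suc funpow_Suc_right o_apply delta_goncarov funpow_delta_smult)
    moreover have "a + b * of_nat (Suc i) = (a + b) + b * of_nat i"
      by (simp add: algebra_simps)
    ultimately have "poly ((d ^^ Suc i) (goncarov a b n)) (a + b * of_nat (Suc i))
        = of_nat n * poly ((d ^^ i) (goncarov (a + b) b m)) ((a + b) + b * of_nat i)"
      by (simp only: poly_smult)
    also have "\<dots> = (if Suc i = n then of_nat (fact n) else 0)"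
      using Suc.IH[of "a + b" m] Suc by (simp add: fact_Suc algebra_simps)
    finally show ?thesis .
  qed
qed

lemma goncarov_eq_div:
  assumes "n \<ge> 1"
  shows "goncarov a b n = ([:- a, 1:] * pcompose (p n) [:- (a + of_nat n * b), 1:]) div [:- (a + of_nat n * b), 1:]"
proof -
  obtain m where n: "n = Suc m"
    using assms by (cases n) auto
  define c where "c = a + of_nat n * b"
  have "pcompose [:of_nat n * b, 1:] [:- c, 1:] = [:- a, 1:]"
    by (simp add: pcompose_pCons c_def)
  then have "goncarov a b n = [:- a, 1:] * pcompose (basic_div_x m) [:- c, 1:]"
    by (simp only: goncarov_def shift_poly_def c_def n abel_Suc pcompose_mult)
  moreover have "pcompose (p n) [:- c, 1:] = [:- c, 1:] * pcompose (basic_div_x m) [:- c, 1:]"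
    by (simp only: n basic_Suc_eq pcompose_mult) (simp add: pcompose_pCons)
  ultimately have "[:- a, 1:] * pcompose (p n) [:- c, 1:] = [:- c, 1:] * goncarov a b n"
    by (simp only: mult.left_commute)
  then show ?thesis
    by (metis c_def nonzero_mult_div_cancel_left pCons_eq_0_iff one_neq_zero)
qed

end

theorem mainTheorem16:
  fixes d :: "'a::field_char_0 poly \<Rightarrow> 'a poly"
    and p t :: "nat \<Rightarrow> 'a poly"
    and a b :: 'a and n :: nat
  assumes "delta_operator d"
    and "basic_sequence d p"
    and "goncarov_basis d (\<lambda>i. a + b * of_nat i) t"
    and "n \<ge> 1"
  shows "t n = ([:- a, 1:] * pcompose (p n) [:- (a + of_nat n * b), 1:])
               div [:- (a + of_nat n * b), 1:]"
proof -
  interpret delta_basis d p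
    using assms(1,2) by unfold_locales
  have "t n = goncarov a b n"
    by (intro goncarov_basis_unique[OF assms(3)]) (simp_all add: degree_goncarov poly_funpow_delta_goncarov)
  also have "\<dots> = ([:- a, 1:] * pcompose (p n) [:- (a + of_nat n * b), 1:]) div [:- (a + of_nat n * b), 1:]"
    using assms(4) by (rule goncarov_eq_div)
  finally show ?thesis .
qed

end
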